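(* Let $\mathcal{C}$ be a PL-cograph that takes more than one value. Then $\mathcal{C}$ takes at least three distinct values, and for any distinct points $P,Q$ there is a point $R$ such that $\mathcal{C}(P,Q)$, $\mathcal{C}(P,R)$ and $\mathcal{C}(Q,R)$ are pairwise distinct.
   Context: A cograph is a function $\mathcal{C}$ assigning to each unordered pair $\{P,Q\}$ of distinct elements of a point set a value $\mathcal{C}(P,Q)$ (an edge). A PL-cograph is a cograph satisfying: (1) for distinct points $P,Q,R$, if $\mathcal{C}(P,Q)=\mathcal{C}(Q,R)$ then $\mathcal{C}(P,Q)=\mathcal{C}(P,R)$; (2) for distinct points $P,Q,R,S$, if $\mathcal{C}(P,Q)=\mathcal{C}(R,S)$ then $\mathcal{C}(P,Q)=\mathcal{C}(P,R)=\mathcal{C}(P,S)=\mathcal{C}(Q,R)=\mathcal{C}(Q,S)$. *)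

theory Defs
  imports Main
begin

text \<open>A cograph on the point set X: a value C P Q for each unordered pair of
distinct points, modelled as a function symmetric on distinct points of X.\<close>
definition cograph :: "'a set \<Rightarrow> ('a \<Rightarrow> 'a \<Rightarrow> 'b) \<Rightarrow> bool" where
  "cograph X C \<longleftrightarrow> (\<forall>P\<in>X. \<forall>Q\<in>X. P \<noteq> Q \<longrightarrow> C P Q = C Q P)"

definition PL_cograph :: "'a set \<Rightarrow> ('a \<Rightarrow> 'a \<Rightarrow> 'b) \<Rightarrow> bool" where
  "PL_cograph X C \<longleftrightarrow> cograph X C \<and>
     (\<forall>P\<in>X. \<forall>Q\<in>X. \<forall>R\<in>X. P \<noteq> Q \<and> P \<noteq> R \<and> Q \<noteq> R \<longrightarrow>
        C P Q = C Q R \<longrightarrow> C P Q = C P R) \<and>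
     (\<forall>P\<in>X. \<forall>Q\<in>X. \<forall>R\<in>X. \<forall>S\<in>X.
        P \<noteq> Q \<and> P \<noteq> R \<and> P \<noteq> S \<and> Q \<noteq> R \<and> Q \<noteq> S \<and> R \<noteq> S \<longrightarrow>
        C P Q = C R S \<longrightarrow>
        C P Q = C P R \<and> C P Q = C P S \<and> C P Q = C Q R \<and> C P Q = C Q S)"

definition cograph_values :: "'a set \<Rightarrow> ('a \<Rightarrow> 'a \<Rightarrow> 'b) \<Rightarrow> 'b set" where
  "cograph_values X C = {C P Q | P Q. P \<in> X \<and> Q \<in> X \<and> P \<noteq> Q}"

end

theory Submission
  imports Defs
begin

text \<open>If every edge at a point P carries the value c, then so does every edge AB
avoiding P: the path A P B has two edges of value c, so by the first axiom c = C A B.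
Hence a non-constant PL-cograph has, at each point P and for each edge PQ, an edge PR
of a different value, and the first axiom then forces the triangle PQR to have three
distinct values.\<close>

lemma PL_cograph_commute:
  assumes "PL_cograph X C" "P \<in> X" "Q \<in> X" "P \<noteq> Q"
  shows "C P Q = C Q P"
  using assms unfolding PL_cograph_def cograph_def by blast

lemma PL_cograph_path_eq:
  assumes "PL_cograph X C" "P \<in> X" "Q \<in> X" "R \<in> X" "P \<noteq> Q" "P \<noteq> R" "Q \<noteq> R"
    and "C P Q = C Q R"
  shows "C P Q = C P R"
  using assms unfolding PL_cograph_def by blast

lemma PL_cograph_triangle_distinct:
  assumes PL: "PL_cograph X C" and "P \<in> X" "Q \<in> X" "R \<in> X" "P \<noteq> Q" "R \<noteq> P" "R \<noteq> Q"
    and PR: "C P R \<noteq> C P Q"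
  shows "C P Q \<noteq> C Q R" "C P R \<noteq> C Q R"
proof -
  show "C P Q \<noteq> C Q R"
    using PL_cograph_path_eq[OF PL, of P Q R] assms by auto
  have "C P R \<noteq> C R Q"
    using PL_cograph_path_eq[OF PL, of P R Q] assms by auto
  then show "C P R \<noteq> C Q R"
    using PL_cograph_commute[OF PL, of Q R] assms by auto
qed

lemma PL_cograph_constant_if_star_constant:
  assumes PL: "PL_cograph X C" and P: "P \<in> X"
    and star: "\<And>R. R \<in> X \<Longrightarrow> R \<noteq> P \<Longrightarrow> C P R = c"
    and AB: "A \<in> X" "B \<in> X" "A \<noteq> B"
  shows "C A B = c"
proof (cases "A = P \<or> B = P")
  case True
  then show ?thesis
    using star AB PL_cograph_commute[OF PL, of A B] by auto
next
  case False
  have "C A P = C P B"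
    using star[of A] star[of B] PL_cograph_commute[OF PL, of A P] P AB False by auto
  then have "C A P = C A B"
    using PL_cograph_path_eq[OF PL, of A P B] P AB False by auto
  then show ?thesis
    using star[of A] PL_cograph_commute[OF PL, of A P] P AB False by auto
qed

lemma PL_cograph_distinct_triangle_on_edge:
  assumes PL: "PL_cograph X C"
    and nonconst: "\<exists>u\<in>cograph_values X C. \<exists>v\<in>cograph_values X C. u \<noteq> v"
    and PQ: "P \<in> X" "Q \<in> X" "P \<noteq> Q"
  shows "\<exists>R\<in>X. R \<noteq> P \<and> R \<noteq> Q \<and> C P Q \<noteq> C P R \<and> C P Q \<noteq> C Q R \<and> C P R \<noteq> C Q R"
proof -
  obtain w where "w \<in> cograph_values X C" "w \<noteq> C P Q"
    using nonconst by blast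
  then obtain A B where AB: "A \<in> X" "B \<in> X" "A \<noteq> B" "C A B \<noteq> C P Q"
    unfolding cograph_values_def by blast
  obtain R where R: "R \<in> X" "R \<noteq> P" "C P R \<noteq> C P Q"
    using PL_cograph_constant_if_star_constant[OF PL PQ(1), of "C P Q"] AB by blast
  then have "R \<noteq> Q" by blast
  with R PL_cograph_triangle_distinct[OF PL PQ(1,2) R(1) PQ(3)] show ?thesis
    by auto
qed

theorem lemma5p1:
  fixes X :: "'a set" and C :: "'a \<Rightarrow> 'a \<Rightarrow> 'b"
  assumes "PL_cograph X C"
    and "\<exists>u\<in>cograph_values X C. \<exists>v\<in>cograph_values X C. u \<noteq> v"
  shows "(\<exists>u\<in>cograph_values X C. \<exists>v\<in>cograph_values X C. \<exists>w\<in>cograph_values X C.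
            u \<noteq> v \<and> u \<noteq> w \<and> v \<noteq> w)
       \<and> (\<forall>P\<in>X. \<forall>Q\<in>X. P \<noteq> Q \<longrightarrow>
            (\<exists>R\<in>X. R \<noteq> P \<and> R \<noteq> Q \<and> C P Q \<noteq> C P R \<and> C P Q \<noteq> C Q R \<and> C P R \<noteq> C Q R))"
proof
  show triangles: "\<forall>P\<in>X. \<forall>Q\<in>X. P \<noteq> Q \<longrightarrow>
            (\<exists>R\<in>X. R \<noteq> P \<and> R \<noteq> Q \<and> C P Q \<noteq> C P R \<and> C P Q \<noteq> C Q R \<and> C P R \<noteq> C Q R)"
    using PL_cograph_distinct_triangle_on_edge[OF assms] by blast
  obtain P Q where PQ: "P \<in> X" "Q \<in> X" "P \<noteq> Q"
    using assms(2) unfolding cograph_values_def by blast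
  with triangles obtain R where R: "R \<in> X" "R \<noteq> P" "R \<noteq> Q"
      "C P Q \<noteq> C P R" "C P Q \<noteq> C Q R" "C P R \<noteq> C Q R"
    by blast
  have "C P Q \<in> cograph_values X C" "C P R \<in> cograph_values X C" "C Q R \<in> cograph_values X C"
    unfolding cograph_values_def using PQ R by blast+
  with R show "\<exists>u\<in>cograph_values X C. \<exists>v\<in>cograph_values X C. \<exists>w\<in>cograph_values X C.
            u \<noteq> v \<and> u \<noteq> w \<and> v \<noteq> w"
    by blast
qed

end
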